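(* Let $\Bbbk$ be a field, $S=\Bbbk[x_1,\ldots,x_n]$, $\prec$ a monomial order on $S$, $P=\{p_1,\ldots,p_m\}\subset\Bbbk^n$ distinct points, and $B$ the set of monomials outside $\mathrm{in}_\prec(I(P))$. Let $E=\{x_{i_1},\ldots,x_{i_{\bar n}}\}$ be a set of variables with $\mathrm{supp}(B)\subseteq E$, $|E|\le\min(m-1,n)$ and $E(P)$ of rank $|E|$, and suppose that for every variable $x_k\notin E$ there are constants $c_{k0},c_{kj}\in\Bbbk$ with $x_k-c_{k0}-\sum_j c_{kj}x_{i_j}\in I(P)$ and $x_k\succ x_{i_j}$ whenever $c_{kj}\ne0$. Let $\pi$, $T$, $\pi^*$, $\prec'$ be as in the context, and let $G'$ be the reduced Gröbner basis of $I(\pi(P))\subseteq T$ with respect to $\prec'$. Then $$G=\pi^*(G')\sqcup\Big\{x_k-c_{k0}-\sum_j c_{kj}\,\pi^*\big(\mathrm{nf}((\pi^* )^{-1}(x_{i_j}),G')\big)\ :\ x_k\notin E\Big\}$$ is a reduced Gröbner basis of $I(P)$ with respect to $\prec$.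
   Context: $I(Q)$ is the vanishing ideal of a finite point set $Q$; $\mathrm{in}_\prec$ denotes the initial ideal. The support of a set of monomials is the set of variables occurring in them. $E(P)$ is the matrix of evaluation vectors of the variables in $E$ at the points. $\pi:\Bbbk^n\to\Bbbk^{\bar n}$, $\pi(a_1,\ldots,a_n)=(a_{i_1},\ldots,a_{i_{\bar n}})$; $T=\Bbbk[y_{i_1},\ldots,y_{i_{\bar n}}]$; $\pi^*:T\to S$ the monomorphism $y_{i_j}\mapsto x_{i_j}$; $\prec'$ the order on $T$ with $y^\alpha\prec' y^\beta$ iff $\pi^*(y^\alpha)\prec\pi^*(y^\beta)$. For $f\in T$, $\mathrm{nf}(f,G')$ is the normal form of $f$ modulo $I(\pi(P))$ with respect to $G'$, i.e. the unique linear combination of monomials outside $\mathrm{in}_{\prec'}(I(\pi(P)))$ congruent to $f$ modulo $I(\pi(P))$. *)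

theory Defs
  imports "HOL-Library.Poly_Mapping" "Jordan_Normal_Form.DL_Rank"
begin

type_synonym monom = "nat \<Rightarrow>\<^sub>0 nat"
type_synonym 'a mpoly = "monom \<Rightarrow>\<^sub>0 'a"

definition Var :: "nat \<Rightarrow> 'a::comm_ring_1 mpoly" where
  "Var i = Poly_Mapping.single (Poly_Mapping.single i 1) 1"

definition Const :: "'a::comm_ring_1 \<Rightarrow> 'a mpoly" where
  "Const c = Poly_Mapping.single 0 c"

definition monom_poly :: "monom \<Rightarrow> 'a::comm_ring_1 mpoly" where
  "monom_poly m = Poly_Mapping.single m 1"

definition poly_vars :: "'a::zero mpoly \<Rightarrow> nat set" where
  "poly_vars f = \<Union> (Poly_Mapping.keys ` Poly_Mapping.keys f)"

definition supp :: "monom set \<Rightarrow> nat set" where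
  "supp B = \<Union> (Poly_Mapping.keys ` B)"

definition polys :: "nat set \<Rightarrow> 'a::zero mpoly set" where
  "polys V = {f. poly_vars f \<subseteq> V}"

definition monoms :: "nat set \<Rightarrow> monom set" where
  "monoms V = {m. Poly_Mapping.keys m \<subseteq> V}"

definition eval :: "'a::comm_ring_1 mpoly \<Rightarrow> (nat \<Rightarrow> 'a) \<Rightarrow> 'a" where
  "eval f a = (\<Sum>m\<in>Poly_Mapping.keys f. Poly_Mapping.lookup f m * (\<Prod>i\<in>Poly_Mapping.keys m. a i ^ Poly_Mapping.lookup m i))"

definition vanishing_ideal :: "nat set \<Rightarrow> (nat \<Rightarrow> 'a::comm_ring_1) set \<Rightarrow> 'a mpoly set" where
  "vanishing_ideal V Q = {f \<in> polys V. \<forall>a\<in>Q. eval f a = 0}"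

definition ideal_gen :: "nat set \<Rightarrow> 'a::comm_ring_1 mpoly set \<Rightarrow> 'a mpoly set" where
  "ideal_gen V A = {\<Sum>g\<in>G. q g * g | G q. finite G \<and> G \<subseteq> A \<and> (\<forall>g\<in>G. q g \<in> polys V)}"

definition monomial_order :: "nat set \<Rightarrow> (monom \<Rightarrow> monom \<Rightarrow> bool) \<Rightarrow> bool" where
  "monomial_order V ord \<longleftrightarrow>
     (\<forall>a\<in>monoms V. \<not> ord a a) \<and>
     (\<forall>a\<in>monoms V. \<forall>b\<in>monoms V. \<forall>c\<in>monoms V. ord a b \<longrightarrow> ord b c \<longrightarrow> ord a c) \<and>
     (\<forall>a\<in>monoms V. \<forall>b\<in>monoms V. a = b \<or> ord a b \<or> ord b a) \<and>
     (\<forall>a\<in>monoms V. \<forall>b\<in>monoms V. \<forall>c\<in>monoms V. ord a b \<longrightarrow> ord (a + c) (b + c)) \<and>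
     (\<forall>a\<in>monoms V. a \<noteq> 0 \<longrightarrow> ord 0 a)"

text \<open>restriction of an order to monomials in the variables E
  (the order on T pulled back along the inclusion pi*)\<close>
definition restrict_order :: "nat set \<Rightarrow> (monom \<Rightarrow> monom \<Rightarrow> bool) \<Rightarrow> monom \<Rightarrow> monom \<Rightarrow> bool" where
  "restrict_order E ord a b \<longleftrightarrow> a \<in> monoms E \<and> b \<in> monoms E \<and> ord a b"

definition lm :: "(monom \<Rightarrow> monom \<Rightarrow> bool) \<Rightarrow> 'a::zero mpoly \<Rightarrow> monom" where
  "lm ord f = (THE m. m \<in> Poly_Mapping.keys f \<and> (\<forall>m'\<in>Poly_Mapping.keys f. m' \<noteq> m \<longrightarrow> ord m' m))"

definition lc :: "(monom \<Rightarrow> monom \<Rightarrow> bool) \<Rightarrow> 'a::zero mpoly \<Rightarrow> 'a" where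
  "lc ord f = Poly_Mapping.lookup f (lm ord f)"

definition initial_ideal :: "nat set \<Rightarrow> (monom \<Rightarrow> monom \<Rightarrow> bool) \<Rightarrow> 'a::comm_ring_1 mpoly set \<Rightarrow> 'a mpoly set" where
  "initial_ideal V ord I = ideal_gen V {monom_poly (lm ord f) | f. f \<in> I \<and> f \<noteq> 0}"

definition std_monoms :: "nat set \<Rightarrow> (monom \<Rightarrow> monom \<Rightarrow> bool) \<Rightarrow> 'a::comm_ring_1 mpoly set \<Rightarrow> monom set" where
  "std_monoms V ord I = {m \<in> monoms V. (monom_poly m :: 'a mpoly) \<notin> initial_ideal V ord I}"

definition is_groebner_basis :: "nat set \<Rightarrow> (monom \<Rightarrow> monom \<Rightarrow> bool) \<Rightarrow> 'a::comm_ring_1 mpoly set \<Rightarrow> 'a mpoly set \<Rightarrow> bool" where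
  "is_groebner_basis V ord I G \<longleftrightarrow> finite G \<and> G \<subseteq> I \<and> 0 \<notin> G \<and>
     ideal_gen V {monom_poly (lm ord g) | g. g \<in> G} = initial_ideal V ord I"

definition is_reduced_groebner_basis :: "nat set \<Rightarrow> (monom \<Rightarrow> monom \<Rightarrow> bool) \<Rightarrow> 'a::comm_ring_1 mpoly set \<Rightarrow> 'a mpoly set \<Rightarrow> bool" where
  "is_reduced_groebner_basis V ord I G \<longleftrightarrow> is_groebner_basis V ord I G \<and>
     (\<forall>g\<in>G. lc ord g = 1) \<and>
     (\<forall>g\<in>G. \<forall>m\<in>Poly_Mapping.keys g. monom_poly m \<notin> ideal_gen V {(monom_poly (lm ord h) :: 'a mpoly) | h. h \<in> G - {g}})"

definition nf :: "nat set \<Rightarrow> (monom \<Rightarrow> monom \<Rightarrow> bool) \<Rightarrow> 'a::comm_ring_1 mpoly set \<Rightarrow> 'a mpoly \<Rightarrow> 'a mpoly" where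
  "nf V ord I f = (THE h. Poly_Mapping.keys h \<subseteq> std_monoms V ord I \<and> f - h \<in> I)"

text \<open>the projection pi onto the coordinates in E (coordinates outside E set to 0,
  which are irrelevant for polynomials in the variables E)\<close>
definition proj :: "nat set \<Rightarrow> (nat \<Rightarrow> 'a::zero) \<Rightarrow> (nat \<Rightarrow> 'a)" where
  "proj E p = (\<lambda>i. if i \<in> E then p i else 0)"

text \<open>E(P): the |E| x m matrix whose rows are the evaluation vectors of the variables
  x_i, i in E (in increasing order of i), at the points p_1,...,p_m\<close>
definition eval_matrix :: "nat set \<Rightarrow> nat \<Rightarrow> (nat \<Rightarrow> nat \<Rightarrow> 'a) \<Rightarrow> 'a mat" where
  "eval_matrix E m ps = mat (card E) m (\<lambda>(r, l). ps l (sorted_list_of_set E ! r))"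

end

(*
  Each linear relation x_k = c_k0 + sum_j c_kj x_ij (with x_ij < x_k) is turned into an element
  g_k of I(P) with leading monomial x_k by replacing x_ij with its normal form modulo I(pi(P)).
  If f in I(P) is nonzero and its leading monomial involves a variable outside E, it is divisible
  by some x_k. Otherwise, eliminating the variables outside E from f by the linear relations only
  creates smaller monomials, so f is congruent modulo I(P) to a polynomial h in the variables E with
  the same leading monomial; h lies in I(pi(P)), so that monomial is divisible by a leading
  monomial of G'. The tails of the g_k consist of 1 and standard monomials of I(pi(P)), and no
  other basis element involves x_k, which gives reducedness.
*)

theory Submission
  imports Defs "HOL-Computational_Algebra.Polynomial" "HOL-Library.FuncSet"
begin

section \<open>Monomials and polynomials\<close>

lemma keys_add_monom: "Poly_Mapping.keys (a + b :: monom) = Poly_Mapping.keys a \<union> Poly_Mapping.keys b"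
  by (auto simp: in_keys_iff lookup_add)

lemma monoms_add_iff: "a + b \<in> monoms V \<longleftrightarrow> a \<in> monoms V \<and> b \<in> monoms V"
  by (auto simp: monoms_def keys_add_monom)

lemma zero_in_monoms [simp]: "0 \<in> monoms V"
  by (simp add: monoms_def)

lemma single_in_monoms: "i \<in> V \<Longrightarrow> Poly_Mapping.single i j \<in> monoms V"
  by (simp add: monoms_def)

lemma monoms_mono: "V \<subseteq> W \<Longrightarrow> monoms V \<subseteq> monoms W"
  by (auto simp: monoms_def)

lemma single_one_nonzero [simp]: "Poly_Mapping.single k (1::nat) \<noteq> 0"
  by (metis lookup_single_eq lookup_zero one_neq_zero)

lemma single_eq_single_iff [simp]:
  "Poly_Mapping.single i j = (Poly_Mapping.single i d :: monom) \<longleftrightarrow> j = d"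
  by (metis lookup_single_eq)

lemma monom_split_single:
  "d \<le> Poly_Mapping.lookup u i \<Longrightarrow> (u::monom) = (u - Poly_Mapping.single i d) + Poly_Mapping.single i d"
  by (rule poly_mapping_eqI) (auto simp: lookup_add lookup_minus lookup_single when_def)

lemma polys_iff_keys: "f \<in> polys V \<longleftrightarrow> Poly_Mapping.keys f \<subseteq> monoms V"
  by (auto simp: polys_def poly_vars_def monoms_def)

lemma polys_zero [simp]: "0 \<in> polys V"
  by (simp add: polys_iff_keys)

lemma polys_add: "f \<in> polys V \<Longrightarrow> g \<in> polys V \<Longrightarrow> f + g \<in> polys V"
  using keys_add[of f g] by (auto simp: polys_iff_keys)

lemma polys_diff: "f \<in> polys V \<Longrightarrow> g \<in> polys V \<Longrightarrow> f - g \<in> polys V"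
  using keys_diff[of f g] by (auto simp: polys_iff_keys)

lemma polys_mult: "f \<in> polys V \<Longrightarrow> g \<in> polys V \<Longrightarrow> f * g \<in> polys V"
  using keys_mult[of f g] by (fastforce simp: polys_iff_keys monoms_add_iff)

lemma polys_sum: "(\<And>x. x \<in> A \<Longrightarrow> F x \<in> polys V) \<Longrightarrow> sum F A \<in> polys V"
  by (induction A rule: infinite_finite_induct) (auto intro: polys_add)

lemma polys_single: "w \<in> monoms V \<Longrightarrow> Poly_Mapping.single w a \<in> polys V"
  by (simp add: polys_iff_keys)

lemma polys_Const [simp]: "Const a \<in> polys V"
  by (simp add: Const_def polys_single)

lemma polys_Var: "i \<in> V \<Longrightarrow> Var i \<in> polys V"
  by (simp add: Var_def polys_single single_in_monoms)

lemma polys_monom_poly: "w \<in> monoms V \<Longrightarrow> monom_poly w \<in> polys V"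
  by (simp add: monom_poly_def polys_single)

lemma polys_mono: "V \<subseteq> W \<Longrightarrow> f \<in> polys V \<Longrightarrow> f \<in> polys W"
  by (auto simp: polys_def)

lemma lookup_Const_mult: "Poly_Mapping.lookup (Const a * f) m = (a::'a::comm_ring_1) * Poly_Mapping.lookup f m"
  unfolding Const_def mult_map_scale_conv_mult[symmetric]
  by transfer (simp add: when_def)

lemma keys_Const_mult: "Poly_Mapping.keys (Const a * f) \<subseteq> Poly_Mapping.keys (f :: 'a::comm_ring_1 mpoly)"
  by (auto simp: in_keys_iff lookup_Const_mult)

lemma Const_mult_single: "Const a * Poly_Mapping.single m b = Poly_Mapping.single m (a * b :: 'a::comm_ring_1)"
  by (simp add: Const_def mult_single)

lemma monom_poly_mult_single:
  "monom_poly w * Poly_Mapping.single m a = Poly_Mapping.single (w + m) (a :: 'a::comm_ring_1)"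
  by (simp add: monom_poly_def mult_single)

lemma keys_monom_poly [simp]: "Poly_Mapping.keys (monom_poly m :: 'a::comm_ring_1 mpoly) = {m}"
  by (simp add: monom_poly_def)

lemma sum_single_lookup: "(\<Sum>v\<in>Poly_Mapping.keys f. Poly_Mapping.single v (Poly_Mapping.lookup f v)) = f"
  by (rule poly_mapping_eqI) (simp add: lookup_sum lookup_single when_def in_keys_iff)

lemma sum_Const_monom_poly:
  "(\<Sum>v\<in>Poly_Mapping.keys f. Const (Poly_Mapping.lookup f v) * monom_poly v) = (f :: 'a::comm_ring_1 mpoly)"
  by (simp add: monom_poly_def Const_mult_single sum_single_lookup)

lemma keys_linear_combination:
  "Poly_Mapping.keys (\<Sum>v\<in>A. Const (a v) * H v) \<subseteq> (\<Union>v\<in>A. Poly_Mapping.keys (H v :: 'a::comm_ring_1 mpoly))"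
  using keys_sum keys_Const_mult by fastforce

section \<open>Evaluation and vanishing ideals\<close>

definition eval_monom :: "monom \<Rightarrow> (nat \<Rightarrow> 'a::comm_ring_1) \<Rightarrow> 'a" where
  "eval_monom m a = (\<Prod>i\<in>Poly_Mapping.keys m. a i ^ Poly_Mapping.lookup m i)"

lemma eval_eq_sum_eval_monom:
  "eval f a = (\<Sum>m\<in>Poly_Mapping.keys f. Poly_Mapping.lookup f m * eval_monom m a)"
  by (simp add: eval_def eval_monom_def)

lemma eval_monom_superset:
  "finite S \<Longrightarrow> Poly_Mapping.keys m \<subseteq> S \<Longrightarrow> eval_monom m a = (\<Prod>i\<in>S. a i ^ Poly_Mapping.lookup m i)"
  unfolding eval_monom_def by (rule prod.mono_neutral_left) (auto simp: in_keys_iff)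

lemma eval_monom_add: "eval_monom (m1 + m2) a = eval_monom m1 a * eval_monom m2 a"
proof -
  let ?S = "Poly_Mapping.keys m1 \<union> Poly_Mapping.keys m2"
  have "eval_monom (m1 + m2) a = (\<Prod>i\<in>?S. a i ^ Poly_Mapping.lookup (m1 + m2) i)"
    by (rule eval_monom_superset) (auto simp: keys_add_monom)
  also have "\<dots> = (\<Prod>i\<in>?S. a i ^ Poly_Mapping.lookup m1 i) * (\<Prod>i\<in>?S. a i ^ Poly_Mapping.lookup m2 i)"
    by (simp add: lookup_add power_add prod.distrib)
  also have "\<dots> = eval_monom m1 a * eval_monom m2 a"
    using eval_monom_superset[of ?S m1 a] eval_monom_superset[of ?S m2 a] by simp
  finally show ?thesis .
qed

lemma eval_monom_zero [simp]: "eval_monom 0 a = 1"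
  by (simp add: eval_monom_def)

lemma eval_monom_single [simp]: "eval_monom (Poly_Mapping.single i j) a = a i ^ j"
  by (simp add: eval_monom_def)

lemma eval_single: "eval (Poly_Mapping.single m b) a = b * eval_monom m a"
  by (simp add: eval_eq_sum_eval_monom)

lemma eval_zero [simp]: "eval 0 a = 0"
  by (simp add: eval_def)

lemma eval_add: "eval (f + g) a = eval f a + eval g a"
  unfolding eval_eq_sum_eval_monom by (rule setsum_keys_plus_distrib) (auto simp: algebra_simps)

lemma eval_uminus: "eval (- f) a = - eval f a"
  by (simp add: eval_eq_sum_eval_monom sum_negf)

lemma eval_diff: "eval (f - g) a = eval f a - eval g a"
  using eval_add[of f "- g" a] by (simp add: eval_uminus)

lemma eval_sum: "eval (sum F A) a = (\<Sum>x\<in>A. eval (F x) a)"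
  by (induction A rule: infinite_finite_induct) (auto simp: eval_add)

lemma eval_mult: "eval (f * g) a = eval f a * eval g a"
proof -
  have "f * g = (\<Sum>u\<in>Poly_Mapping.keys f. \<Sum>v\<in>Poly_Mapping.keys g.
        Poly_Mapping.single u (Poly_Mapping.lookup f u) * Poly_Mapping.single v (Poly_Mapping.lookup g v))"
    by (subst (1 2) sum_single_lookup[symmetric]) (simp add: sum_product)
  then have "eval (f * g) a = (\<Sum>u\<in>Poly_Mapping.keys f. \<Sum>v\<in>Poly_Mapping.keys g.
      Poly_Mapping.lookup f u * eval_monom u a * (Poly_Mapping.lookup g v * eval_monom v a))"
    by (simp add: eval_sum mult_single eval_single eval_monom_add algebra_simps)
  also have "\<dots> = eval f a * eval g a"
    by (simp add: eval_eq_sum_eval_monom sum_product)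
  finally show ?thesis .
qed

lemma eval_proj: "f \<in> polys E \<Longrightarrow> eval f (proj E p) = eval f p"
  unfolding eval_eq_sum_eval_monom eval_monom_def polys_iff_keys monoms_def proj_def
  by (intro sum.cong refl arg_cong2[where f="(*)"] prod.cong) auto

lemma vanishing_ideal_polys: "f \<in> vanishing_ideal V Q \<Longrightarrow> f \<in> polys V"
  by (simp add: vanishing_ideal_def)

lemma vanishing_ideal_zero: "0 \<in> vanishing_ideal V Q"
  by (simp add: vanishing_ideal_def)

lemma vanishing_ideal_add:
  "f \<in> vanishing_ideal V Q \<Longrightarrow> g \<in> vanishing_ideal V Q \<Longrightarrow> f + g \<in> vanishing_ideal V Q"
  by (simp add: vanishing_ideal_def polys_add eval_add)

lemma vanishing_ideal_diff:
  "f \<in> vanishing_ideal V Q \<Longrightarrow> g \<in> vanishing_ideal V Q \<Longrightarrow> f - g \<in> vanishing_ideal V Q"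
  by (simp add: vanishing_ideal_def polys_diff eval_diff)

lemma vanishing_ideal_mult:
  "p \<in> polys V \<Longrightarrow> f \<in> vanishing_ideal V Q \<Longrightarrow> p * f \<in> vanishing_ideal V Q"
  by (simp add: vanishing_ideal_def polys_mult eval_mult)

lemma vanishing_ideal_Const_mult: "f \<in> vanishing_ideal V Q \<Longrightarrow> Const a * f \<in> vanishing_ideal V Q"
  by (simp add: vanishing_ideal_mult)

lemma vanishing_ideal_sum:
  "(\<And>x. x \<in> A \<Longrightarrow> F x \<in> vanishing_ideal V Q) \<Longrightarrow> sum F A \<in> vanishing_ideal V Q"
  by (induction A rule: infinite_finite_induct) (auto intro: vanishing_ideal_add vanishing_ideal_zero)

lemma vanishing_ideal_proj_iff:
  assumes "E \<subseteq> V" "f \<in> polys E"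
  shows "f \<in> vanishing_ideal E (proj E ` Q) \<longleftrightarrow> f \<in> vanishing_ideal V Q"
  using assms by (auto simp: vanishing_ideal_def eval_proj intro: polys_mono)

lemma linear_combination_in_vanishing_ideal:
  assumes "\<And>v. v \<in> Poly_Mapping.keys f \<Longrightarrow> monom_poly v - H v \<in> vanishing_ideal V Q"
  shows "f - (\<Sum>v\<in>Poly_Mapping.keys f. Const (Poly_Mapping.lookup f v) * H v) \<in> vanishing_ideal V Q"
proof -
  have "f - (\<Sum>v\<in>Poly_Mapping.keys f. Const (Poly_Mapping.lookup f v) * H v) =
      (\<Sum>v\<in>Poly_Mapping.keys f. Const (Poly_Mapping.lookup f v) * (monom_poly v - H v))"
    by (simp add: right_diff_distrib sum_subtractf sum_Const_monom_poly)
  also have "\<dots> \<in> vanishing_ideal V Q"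
    using assms by (intro vanishing_ideal_sum vanishing_ideal_Const_mult)
  finally show ?thesis .
qed

lemma monom_reduce:
  fixes g :: "'a::field mpoly"
  assumes g: "g \<in> vanishing_ideal V Q" and a: "a \<in> Poly_Mapping.keys g" and w: "w \<in> monoms V"
  obtains r where "Poly_Mapping.keys r \<subseteq> (\<lambda>v. w + v) ` (Poly_Mapping.keys g - {a})"
    and "monom_poly (w + a) - r \<in> vanishing_ideal V Q"
proof
  define b where "b = Poly_Mapping.lookup g a"
  have b: "b \<noteq> 0" using a by (simp add: b_def in_keys_iff)
  define r where "r = - (\<Sum>v\<in>Poly_Mapping.keys g - {a}. Poly_Mapping.single (w + v) (Poly_Mapping.lookup g v / b))"
  have "Const (1 / b) * (monom_poly w * g) =
      (\<Sum>v\<in>Poly_Mapping.keys g. Poly_Mapping.single (w + v) (Poly_Mapping.lookup g v / b))"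
    by (subst (1) sum_single_lookup[symmetric])
      (simp add: sum_distrib_left monom_poly_mult_single Const_mult_single)
  also have "\<dots> = monom_poly (w + a) - r"
    using a b by (simp add: sum.remove r_def monom_poly_def b_def)
  finally show "monom_poly (w + a) - r \<in> vanishing_ideal V Q"
    using vanishing_ideal_Const_mult[OF vanishing_ideal_mult[OF polys_monom_poly[OF w] g]] by metis
  show "Poly_Mapping.keys r \<subseteq> (\<lambda>v. w + v) ` (Poly_Mapping.keys g - {a})"
    unfolding r_def keys_minus by (rule order_trans[OF keys_sum]) (auto split: if_splits)
qed

section \<open>Monomial ideals\<close>

lemma ideal_gen_base: "f \<in> A \<Longrightarrow> (f :: 'a::comm_ring_1 mpoly) \<in> ideal_gen V A"
  unfolding ideal_gen_def
  by (intro CollectI exI[where x="{f}"] exI[where x="\<lambda>_. 1"]) (simp add: polys_iff_keys)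

lemma ideal_gen_zero: "(0 :: 'a::comm_ring_1 mpoly) \<in> ideal_gen V A"
  unfolding ideal_gen_def by (intro CollectI exI[where x="{}"]) simp

lemma ideal_gen_add:
  assumes "f \<in> ideal_gen V A" "g \<in> ideal_gen V A"
  shows "(f :: 'a::comm_ring_1 mpoly) + g \<in> ideal_gen V A"
proof -
  obtain F :: "'a mpoly set" and p where F: "f = (\<Sum>h\<in>F. p h * h)" "finite F" "F \<subseteq> A" "\<forall>h\<in>F. p h \<in> polys V"
    using assms(1) unfolding ideal_gen_def by blast
  obtain G :: "'a mpoly set" and q where G: "g = (\<Sum>h\<in>G. q h * h)" "finite G" "G \<subseteq> A" "\<forall>h\<in>G. q h \<in> polys V"
    using assms(2) unfolding ideal_gen_def by blast
  define s where "s h = (if h \<in> F then p h else 0) + (if h \<in> G then q h else 0)" for h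
  have "(\<Sum>h\<in>F \<union> G. s h * h) =
      (\<Sum>h\<in>F \<union> G. if h \<in> F then p h * h else 0) + (\<Sum>h\<in>F \<union> G. if h \<in> G then q h * h else 0)"
    unfolding s_def sum.distrib[symmetric] by (rule sum.cong) (auto simp: distrib_right)
  also have "\<dots> = f + g"
    using F G by (simp add: sum.If_cases Int_absorb1 Int_absorb2)
  finally have "f + g = (\<Sum>h\<in>F \<union> G. s h * h)" by simp
  moreover have "\<forall>h\<in>F \<union> G. s h \<in> polys V"
    using F G by (auto simp: s_def intro!: polys_add)
  ultimately show ?thesis using F G unfolding ideal_gen_def by blast
qed

lemma ideal_gen_mult:
  assumes "p \<in> polys V" "f \<in> ideal_gen V A"
  shows "p * (f :: 'a::comm_ring_1 mpoly) \<in> ideal_gen V A"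
proof -
  obtain F :: "'a mpoly set" and q where F: "f = (\<Sum>h\<in>F. q h * h)" "finite F" "F \<subseteq> A" "\<forall>h\<in>F. q h \<in> polys V"
    using assms(2) unfolding ideal_gen_def by blast
  have "p * f = (\<Sum>h\<in>F. (p * q h) * h)"
    using F by (simp add: sum_distrib_left mult.assoc)
  moreover have "\<forall>h\<in>F. p * q h \<in> polys V"
    using F assms(1) by (auto intro: polys_mult)
  ultimately show ?thesis
    using F unfolding ideal_gen_def by (intro CollectI exI[where x=F] exI[where x="\<lambda>h. p * q h"]) auto
qed

lemma ideal_gen_sum:
  "(\<And>x. x \<in> B \<Longrightarrow> F x \<in> ideal_gen V A) \<Longrightarrow> sum F B \<in> ideal_gen V (A :: 'a::comm_ring_1 mpoly set)"
  by (induction B rule: infinite_finite_induct) (auto intro: ideal_gen_add ideal_gen_zero)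

lemma ideal_gen_subset:
  assumes "A \<subseteq> ideal_gen V B"
  shows "ideal_gen V A \<subseteq> ideal_gen V (B :: 'a::comm_ring_1 mpoly set)"
proof
  fix f assume "f \<in> ideal_gen V A"
  then obtain F :: "'a mpoly set" and q where F: "f = (\<Sum>h\<in>F. q h * h)" "F \<subseteq> A" "\<forall>h\<in>F. q h \<in> polys V"
    unfolding ideal_gen_def by blast
  show "f \<in> ideal_gen V B"
    unfolding F(1) using F(2,3) assms by (intro ideal_gen_sum ideal_gen_mult) auto
qed

lemma monom_poly_in_monomial_ideal_iff:
  assumes "m \<in> monoms V"
  shows "(monom_poly m :: 'a::field mpoly) \<in> ideal_gen V (monom_poly ` A) \<longleftrightarrow>
    (\<exists>a\<in>A. \<exists>w\<in>monoms V. m = a + w)"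
proof
  assume "(monom_poly m :: 'a mpoly) \<in> ideal_gen V (monom_poly ` A)"
  then obtain F :: "'a mpoly set" and q where F: "monom_poly m = (\<Sum>h\<in>F. q h * h)" "F \<subseteq> monom_poly ` A"
    unfolding ideal_gen_def by blast
  have "m \<in> Poly_Mapping.keys (\<Sum>h\<in>F. q h * h)"
    unfolding F(1)[symmetric] by simp
  then obtain h where h: "h \<in> F" "m \<in> Poly_Mapping.keys (q h * h)"
    using keys_sum[of "\<lambda>h. q h * h" F] by blast
  then obtain a where a: "a \<in> A" "h = monom_poly a"
    using F(2) by blast
  have "m \<in> {x + y |x y. x \<in> Poly_Mapping.keys (q h) \<and> y \<in> Poly_Mapping.keys h}"
    using keys_mult[of "q h" h] h(2) by blast
  then obtain w where "m = w + a"
    using a(2) by auto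
  then show "\<exists>a\<in>A. \<exists>w\<in>monoms V. m = a + w"
    using a(1) assms by (metis add.commute monoms_add_iff)
next
  assume "\<exists>a\<in>A. \<exists>w\<in>monoms V. m = a + w"
  then obtain a w where a: "a \<in> A" "w \<in> monoms V" "m = a + w" by blast
  have "(monom_poly m :: 'a mpoly) = monom_poly w * monom_poly a"
    by (simp add: a(3) monom_poly_def mult_single add.commute)
  moreover have "(monom_poly a :: 'a mpoly) \<in> ideal_gen V (monom_poly ` A)"
    using a(1) by (intro ideal_gen_base) blast
  ultimately show "(monom_poly m :: 'a mpoly) \<in> ideal_gen V (monom_poly ` A)"
    using ideal_gen_mult[OF polys_monom_poly[OF a(2)]] by simp
qed

lemma lm_monomials_image: "{monom_poly (lm ord g) | g. g \<in> G} = monom_poly ` lm ord ` G"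
  by auto

lemma initial_ideal_eq_monomial_ideal:
  "initial_ideal V ord I = ideal_gen V (monom_poly ` lm ord ` (I - {0}))"
  unfolding initial_ideal_def by (rule arg_cong[where f="ideal_gen V"]) auto

lemma std_monoms_subset: "std_monoms V ord I \<subseteq> monoms V"
  by (auto simp: std_monoms_def)

section \<open>Monomial orders and leading monomials\<close>

locale mon_order =
  fixes V :: "nat set" and ord :: "monom \<Rightarrow> monom \<Rightarrow> bool"
  assumes monomial_order: "monomial_order V ord"
begin

lemma irrefl: "a \<in> monoms V \<Longrightarrow> \<not> ord a a"
  using monomial_order unfolding monomial_order_def by blast

lemma trans: "a \<in> monoms V \<Longrightarrow> b \<in> monoms V \<Longrightarrow> c \<in> monoms V \<Longrightarrow> ord a b \<Longrightarrow> ord b c \<Longrightarrow> ord a c"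
  using monomial_order unfolding monomial_order_def by blast

lemma total: "a \<in> monoms V \<Longrightarrow> b \<in> monoms V \<Longrightarrow> a = b \<or> ord a b \<or> ord b a"
  using monomial_order unfolding monomial_order_def by blast

lemma add_left: "a \<in> monoms V \<Longrightarrow> b \<in> monoms V \<Longrightarrow> c \<in> monoms V \<Longrightarrow> ord a b \<Longrightarrow> ord (c + a) (c + b)"
  using monomial_order unfolding monomial_order_def by (metis add.commute)

lemma zero_less: "a \<in> monoms V \<Longrightarrow> a \<noteq> 0 \<Longrightarrow> ord 0 a"
  using monomial_order unfolding monomial_order_def by blast

lemma asym: "a \<in> monoms V \<Longrightarrow> b \<in> monoms V \<Longrightarrow> ord a b \<Longrightarrow> \<not> ord b a"
  using trans irrefl by blast

lemma less_add: "a \<in> monoms V \<Longrightarrow> w \<in> monoms V \<Longrightarrow> w \<noteq> 0 \<Longrightarrow> ord a (a + w)"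
  using add_left[of 0 w a] zero_less[of w] by simp

lemma less_single:
  assumes "i \<in> V" "j < d"
  shows "ord (Poly_Mapping.single i j) (Poly_Mapping.single i d)"
proof -
  have "Poly_Mapping.single i d = Poly_Mapping.single i j + Poly_Mapping.single i (d - j)"
    using assms(2) by (simp flip: single_add)
  moreover have "Poly_Mapping.single i (d - j) \<noteq> (0::monom)"
    using assms(2) by (metis lookup_single_eq lookup_zero zero_less_diff less_irrefl)
  ultimately show ?thesis
    using less_add assms(1) by (simp add: single_in_monoms)
qed

lemma finite_has_greatest:
  "finite S \<Longrightarrow> S \<noteq> {} \<Longrightarrow> S \<subseteq> monoms V \<Longrightarrow> \<exists>m\<in>S. \<forall>m'\<in>S. m' \<noteq> m \<longrightarrow> ord m' m"
proof (induction S rule: finite_ne_induct)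
  case (insert x F)
  then obtain m where m: "m \<in> F" "\<forall>m'\<in>F. m' \<noteq> m \<longrightarrow> ord m' m"
    by blast
  show ?case
  proof (cases "ord x m")
    case True
    then show ?thesis using m by blast
  next
    case False
    then have "ord m x"
      using total[of x m] m(1) insert by blast
    then have "\<forall>m'\<in>F. ord m' x"
      using m insert.prems trans[of _ m x] by (metis insert_subset subsetD)
    then show ?thesis by blast
  qed
qed blast

lemma lm_eqI:
  assumes "m \<in> Poly_Mapping.keys f" "Poly_Mapping.keys f \<subseteq> monoms V"
    and "\<forall>m'\<in>Poly_Mapping.keys f. m' \<noteq> m \<longrightarrow> ord m' m"
  shows "lm ord f = m"
  unfolding lm_def using assms asym by (intro the_equality) (blast, metis subsetD)

lemma lm_greatest:
  assumes "f \<noteq> 0" "Poly_Mapping.keys f \<subseteq> monoms V"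
  shows "lm ord f \<in> Poly_Mapping.keys f" "\<forall>m'\<in>Poly_Mapping.keys f. m' \<noteq> lm ord f \<longrightarrow> ord m' (lm ord f)"
proof -
  obtain m where "m \<in> Poly_Mapping.keys f" "\<forall>m'\<in>Poly_Mapping.keys f. m' \<noteq> m \<longrightarrow> ord m' m"
    using finite_has_greatest[of "Poly_Mapping.keys f"] assms by auto
  moreover from this have "lm ord f = m"
    using lm_eqI assms(2) by blast
  ultimately show "lm ord f \<in> Poly_Mapping.keys f" "\<forall>m'\<in>Poly_Mapping.keys f. m' \<noteq> lm ord f \<longrightarrow> ord m' (lm ord f)"
    by auto
qed

end

lemma monomial_order_restrict_order:
  assumes ord: "monomial_order V ord" and E: "E \<subseteq> V"
  shows "monomial_order E (restrict_order E ord)"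
proof -
  interpret mon_order V ord by (rule mon_order.intro[OF ord])
  have EV: "a \<in> monoms E \<Longrightarrow> a \<in> monoms V" for a
    using monoms_mono[OF E] by blast
  show ?thesis
    unfolding monomial_order_def
  proof (intro conjI ballI impI)
    fix a b c assume "a \<in> monoms E" "b \<in> monoms E" "c \<in> monoms E"
      "restrict_order E ord a b" "restrict_order E ord b c"
    then show "restrict_order E ord a c"
      using trans EV by (simp add: restrict_order_def) blast
  next
    fix a b c assume "a \<in> monoms E" "b \<in> monoms E" "c \<in> monoms E" "restrict_order E ord a b"
    then show "restrict_order E ord (a + c) (b + c)"
      using add_left[of a b c] EV by (simp add: restrict_order_def monoms_add_iff add.commute)
  qed (use irrefl total zero_less EV in \<open>auto simp: restrict_order_def\<close>)
qed

lemma lm_restrict_order: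
  "Poly_Mapping.keys f \<subseteq> monoms E \<Longrightarrow> lm (restrict_order E ord) f = lm ord f"
  unfolding lm_def restrict_order_def by (metis subsetD)

section \<open>Reduction modulo a vanishing ideal\<close>

definition poly_in_var :: "nat \<Rightarrow> 'a::comm_ring_1 poly \<Rightarrow> 'a mpoly" where
  "poly_in_var i p = (\<Sum>j\<le>degree p. Poly_Mapping.single (Poly_Mapping.single i j) (coeff p j))"

lemma eval_poly_in_var: "eval (poly_in_var i p) a = poly p (a i)"
  by (simp add: poly_in_var_def eval_sum eval_single poly_altdef)

lemma lookup_poly_in_var_degree:
  "Poly_Mapping.lookup (poly_in_var i p) (Poly_Mapping.single i (degree p)) = lead_coeff p"
proof -
  have "Poly_Mapping.lookup (poly_in_var i p) (Poly_Mapping.single i (degree p)) =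
      (\<Sum>j\<le>degree p. if j = degree p then coeff p j else 0)"
    unfolding poly_in_var_def lookup_sum by (intro sum.cong) (auto simp: lookup_single when_def)
  then show ?thesis by simp
qed

lemma keys_poly_in_var:
  "Poly_Mapping.keys (poly_in_var i p) \<subseteq> (\<lambda>j. Poly_Mapping.single i j) ` {..degree p}"
  unfolding poly_in_var_def by (rule order_trans[OF keys_sum]) auto

lemma poly_in_var_in_vanishing_ideal:
  fixes Q :: "(nat \<Rightarrow> 'a::field) set"
  assumes "finite Q" "i \<in> V"
  shows "poly_in_var i (\<Prod>b\<in>(\<lambda>q. q i) ` Q. [:- b, 1:]) \<in> vanishing_ideal V Q"
proof -
  have "poly_in_var i p \<in> polys V" for p :: "'a poly"
    unfolding poly_in_var_def using assms(2) by (intro polys_sum polys_single single_in_monoms)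
  moreover have "poly (\<Prod>b\<in>(\<lambda>q. q i) ` Q. [:- b, 1:]) (a i) = 0" if "a \<in> Q" for a
    using assms(1) that by (auto simp: poly_prod intro!: prod_zero)
  ultimately show ?thesis
    by (simp add: vanishing_ideal_def eval_poly_in_var)
qed

lemma finite_bounded_monoms:
  assumes "finite V"
  shows "finite {u \<in> monoms V. \<forall>i\<in>V. Poly_Mapping.lookup u i < d i}"
proof -
  let ?emb = "\<lambda>g. Abs_poly_mapping (\<lambda>k. if k \<in> V then g k else 0) :: monom"
  have "{u \<in> monoms V. \<forall>i\<in>V. Poly_Mapping.lookup u i < d i} \<subseteq> ?emb ` (\<Pi>\<^sub>E i\<in>V. {..<d i})"
  proof
    fix u assume u: "u \<in> {u \<in> monoms V. \<forall>i\<in>V. Poly_Mapping.lookup u i < d i}"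
    have "finite {k. (if k \<in> V then restrict (Poly_Mapping.lookup u) V k else 0) \<noteq> 0}"
      using assms by (rule finite_subset[rotated]) auto
    moreover have "Poly_Mapping.lookup u k = 0" if "k \<notin> V" for k
      using u that by (auto simp: monoms_def in_keys_iff)
    ultimately have "u = ?emb (restrict (Poly_Mapping.lookup u) V)"
      by (intro poly_mapping_eqI) (auto simp: lookup_Abs_poly_mapping)
    moreover have "restrict (Poly_Mapping.lookup u) V \<in> (\<Pi>\<^sub>E i\<in>V. {..<d i})"
      using u by auto
    ultimately show "u \<in> ?emb ` (\<Pi>\<^sub>E i\<in>V. {..<d i})" by blast
  qed
  moreover have "finite (\<Pi>\<^sub>E i\<in>V. {..<d i})"
    using assms by (intro finite_PiE) auto
  ultimately show ?thesis by (meson finite_surj)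
qed

context mon_order
begin

text \<open>Reduction is justified without using that the monomial order is a well-order (Dickson's
  lemma): every reduction step must also descend in an auxiliary well-founded relation \<open>R\<close>.\<close>

definition reducible_below :: "monom set \<Rightarrow> (monom \<times> monom) set \<Rightarrow> (nat \<Rightarrow> 'a::field) set \<Rightarrow> bool" where
  "reducible_below T R Q \<longleftrightarrow> (\<forall>u\<in>monoms V - T. \<exists>r :: 'a mpoly. Poly_Mapping.keys r \<subseteq> monoms V \<and>
     monom_poly u - r \<in> vanishing_ideal V Q \<and> (\<forall>v\<in>Poly_Mapping.keys r. ord v u \<and> (v, u) \<in> R))"

lemma reduce_monom:
  fixes Q :: "(nat \<Rightarrow> 'a::field) set"
  assumes "wf R" "T \<subseteq> monoms V" "reducible_below T R Q" "u \<in> monoms V"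
  shows "\<exists>h :: 'a mpoly. Poly_Mapping.keys h \<subseteq> T \<and> monom_poly u - h \<in> vanishing_ideal V Q \<and>
    (u \<in> T \<longrightarrow> h = monom_poly u) \<and> (u \<notin> T \<longrightarrow> (\<forall>v\<in>Poly_Mapping.keys h. ord v u))"
  using assms(4)
proof (induction u rule: wf_induct_rule[OF assms(1)])
  case (1 u)
  show ?case
  proof (cases "u \<in> T")
    case True
    then show ?thesis by (intro exI[of _ "monom_poly u"]) (simp add: vanishing_ideal_zero)
  next
    case False
    obtain r :: "'a mpoly" where r: "Poly_Mapping.keys r \<subseteq> monoms V" "monom_poly u - r \<in> vanishing_ideal V Q"
      "\<forall>v\<in>Poly_Mapping.keys r. ord v u \<and> (v, u) \<in> R"
      using assms(3) 1(2) False unfolding reducible_below_def by blast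
    have "\<forall>v\<in>Poly_Mapping.keys r. \<exists>h :: 'a mpoly. Poly_Mapping.keys h \<subseteq> T \<and>
        monom_poly v - h \<in> vanishing_ideal V Q \<and> (v \<in> T \<longrightarrow> h = monom_poly v) \<and>
        (v \<notin> T \<longrightarrow> (\<forall>w\<in>Poly_Mapping.keys h. ord w v))"
      using 1(1) r by blast
    then obtain H where H: "\<And>v. v \<in> Poly_Mapping.keys r \<Longrightarrow> Poly_Mapping.keys (H v) \<subseteq> T \<and>
        monom_poly v - H v \<in> vanishing_ideal V Q \<and> (v \<in> T \<longrightarrow> H v = monom_poly v) \<and>
        (v \<notin> T \<longrightarrow> (\<forall>w\<in>Poly_Mapping.keys (H v). ord w v))"
      by (metis bchoice)
    define h where "h = (\<Sum>v\<in>Poly_Mapping.keys r. Const (Poly_Mapping.lookup r v) * H v)"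
    have "monom_poly u - h = (monom_poly u - r) + (r - h)"
      by simp
    also have "\<dots> \<in> vanishing_ideal V Q"
      unfolding h_def using r(2) H by (intro vanishing_ideal_add linear_combination_in_vanishing_ideal) auto
    finally have "monom_poly u - h \<in> vanishing_ideal V Q" .
    moreover have keys_h: "Poly_Mapping.keys h \<subseteq> (\<Union>v\<in>Poly_Mapping.keys r. Poly_Mapping.keys (H v))"
      unfolding h_def by (rule keys_linear_combination)
    moreover have "ord w u" if "v \<in> Poly_Mapping.keys r" "w \<in> Poly_Mapping.keys (H v)" for v w
      using H[OF that(1)] that r assms(2) 1(2) trans[of w v u] by (cases "v \<in> T") auto
    ultimately show ?thesis
      using H False by blast
  qed
qed

lemma reduce_poly:
  fixes Q :: "(nat \<Rightarrow> 'a::field) set" and f :: "'a mpoly"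
  assumes "wf R" "T \<subseteq> monoms V" "reducible_below T R Q" and f: "Poly_Mapping.keys f \<subseteq> monoms V"
  obtains h where "Poly_Mapping.keys h \<subseteq> T" "f - h \<in> vanishing_ideal V Q"
    "\<forall>v\<in>Poly_Mapping.keys h. \<exists>u\<in>Poly_Mapping.keys f. v = u \<or> ord v u"
    "f \<noteq> 0 \<Longrightarrow> lm ord f \<in> T \<Longrightarrow> Poly_Mapping.lookup h (lm ord f) = Poly_Mapping.lookup f (lm ord f)"
proof -
  obtain H where H: "\<And>u. u \<in> Poly_Mapping.keys f \<Longrightarrow> Poly_Mapping.keys (H u) \<subseteq> T \<and>
      monom_poly u - H u \<in> vanishing_ideal V Q \<and> (u \<in> T \<longrightarrow> H u = monom_poly u) \<and>
      (u \<notin> T \<longrightarrow> (\<forall>v\<in>Poly_Mapping.keys (H u). ord v u))"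
  proof -
    have "\<forall>u\<in>Poly_Mapping.keys f. \<exists>h :: 'a mpoly. Poly_Mapping.keys h \<subseteq> T \<and>
        monom_poly u - h \<in> vanishing_ideal V Q \<and> (u \<in> T \<longrightarrow> h = monom_poly u) \<and>
        (u \<notin> T \<longrightarrow> (\<forall>v\<in>Poly_Mapping.keys h. ord v u))"
      using reduce_monom[OF assms(1-3)] f by blast
    then show thesis
      using that by (metis bchoice)
  qed
  define h where "h = (\<Sum>u\<in>Poly_Mapping.keys f. Const (Poly_Mapping.lookup f u) * H u)"
  have keys_h: "Poly_Mapping.keys h \<subseteq> (\<Union>u\<in>Poly_Mapping.keys f. Poly_Mapping.keys (H u))"
    unfolding h_def by (rule keys_linear_combination)
  have "f - h \<in> vanishing_ideal V Q"
    unfolding h_def using H by (intro linear_combination_in_vanishing_ideal) auto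
  moreover have "\<forall>v\<in>Poly_Mapping.keys h. \<exists>u\<in>Poly_Mapping.keys f. v = u \<or> ord v u"
  proof
    fix v assume "v \<in> Poly_Mapping.keys h"
    then obtain u where u: "u \<in> Poly_Mapping.keys f" "v \<in> Poly_Mapping.keys (H u)"
      using keys_h by blast
    then show "\<exists>u\<in>Poly_Mapping.keys f. v = u \<or> ord v u"
      using H[OF u(1)] by (cases "u \<in> T") auto
  qed
  moreover have "Poly_Mapping.lookup h (lm ord f) = Poly_Mapping.lookup f (lm ord f)"
    if f0: "f \<noteq> 0" and lm: "lm ord f \<in> T"
  proof -
    let ?m = "lm ord f"
    have m: "?m \<in> Poly_Mapping.keys f" "\<forall>u\<in>Poly_Mapping.keys f. u \<noteq> ?m \<longrightarrow> ord u ?m"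
      using lm_greatest[OF f0 f] by blast+
    have "Poly_Mapping.lookup (H u) ?m = 0" if u: "u \<in> Poly_Mapping.keys f - {?m}" for u
    proof (cases "u \<in> T")
      case True
      then show ?thesis using H u by (simp add: monom_poly_def lookup_single)
    next
      case False
      have "?m \<notin> Poly_Mapping.keys (H u)"
      proof
        assume "?m \<in> Poly_Mapping.keys (H u)"
        then have "ord ?m u"
          using H u False by blast
        moreover have "ord u ?m"
          using m(2) u by blast
        ultimately show False
          using asym[of u ?m] u m(1) f by blast
      qed
      then show ?thesis
        by (simp add: in_keys_iff)
    qed
    then have "Poly_Mapping.lookup h ?m = Poly_Mapping.lookup f ?m * Poly_Mapping.lookup (H ?m) ?m"
      unfolding h_def lookup_sum lookup_Const_mult using m(1)
      by (simp add: sum.remove)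
    also have "\<dots> = Poly_Mapping.lookup f ?m"
      using H[OF m(1)] lm by (simp add: monom_poly_def)
    finally show ?thesis .
  qed
  moreover have "Poly_Mapping.keys h \<subseteq> T"
    using keys_h H by blast
  ultimately show ?thesis
    using that by blast
qed

lemma reduce_step_leading:
  fixes f :: "'a::field mpoly"
  assumes f: "f \<in> vanishing_ideal V Q" "f \<noteq> 0" and w: "w \<in> monoms V"
  obtains r where "Poly_Mapping.keys r \<subseteq> monoms V" "monom_poly (w + lm ord f) - r \<in> vanishing_ideal V Q"
    "\<forall>v\<in>Poly_Mapping.keys r. ord v (w + lm ord f)"
proof -
  have keys_f: "Poly_Mapping.keys f \<subseteq> monoms V"
    using vanishing_ideal_polys[OF f(1)] by (simp add: polys_iff_keys)
  note lm = lm_greatest[OF f(2) keys_f]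
  obtain r where r: "Poly_Mapping.keys r \<subseteq> (\<lambda>v. w + v) ` (Poly_Mapping.keys f - {lm ord f})"
    "monom_poly (w + lm ord f) - r \<in> vanishing_ideal V Q"
    using monom_reduce[OF f(1) lm(1) w] .
  have "v \<in> monoms V \<and> ord v (w + lm ord f)" if "v \<in> Poly_Mapping.keys r" for v
  proof -
    obtain v' where v': "v' \<in> Poly_Mapping.keys f" "v' \<noteq> lm ord f" "v = w + v'"
      using r(1) \<open>v \<in> Poly_Mapping.keys r\<close> by blast
    have "v' \<in> monoms V" "lm ord f \<in> monoms V"
      using v'(1) lm(1) keys_f by blast+
    then show ?thesis
      using add_left[of v' "lm ord f" w] lm(2) v' w by (simp add: monoms_add_iff)
  qed
  then show ?thesis
    using that r(2) by blast
qed

lemma reduce_step_univariate: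
  fixes p :: "'a::field poly"
  assumes i: "i \<in> V" and p: "poly_in_var i p \<in> vanishing_ideal V Q" "lead_coeff p = 1"
    and w: "w \<in> monoms V"
  obtains r where "Poly_Mapping.keys r \<subseteq> monoms V"
    "monom_poly (w + Poly_Mapping.single i (degree p)) - r \<in> vanishing_ideal V Q"
    "\<forall>v\<in>Poly_Mapping.keys r. \<exists>j<degree p. v = w + Poly_Mapping.single i j"
proof -
  have "Poly_Mapping.single i (degree p) \<in> Poly_Mapping.keys (poly_in_var i p)"
    using p(2) by (simp add: in_keys_iff lookup_poly_in_var_degree)
  from monom_reduce[OF p(1) this w] obtain r where
    r: "Poly_Mapping.keys r \<subseteq> (\<lambda>v. w + v) ` (Poly_Mapping.keys (poly_in_var i p) - {Poly_Mapping.single i (degree p)})"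
      "monom_poly (w + Poly_Mapping.single i (degree p)) - r \<in> vanishing_ideal V Q" .
  have "v \<in> monoms V \<and> (\<exists>j<degree p. v = w + Poly_Mapping.single i j)" if "v \<in> Poly_Mapping.keys r" for v
  proof -
    obtain u where u: "u \<in> Poly_Mapping.keys (poly_in_var i p)" "u \<noteq> Poly_Mapping.single i (degree p)"
      "v = w + u"
      using r(1) \<open>v \<in> Poly_Mapping.keys r\<close> by blast
    then obtain j where "j \<le> degree p" "u = Poly_Mapping.single i j"
      using keys_poly_in_var[of i p] by blast
    then show ?thesis
      using u w i by (auto simp: monoms_add_iff single_in_monoms)
  qed
  then show ?thesis
    using that r(2) by blast
qed

lemma nf_unique:
  fixes Q :: "(nat \<Rightarrow> 'a::field) set"
  assumes "Poly_Mapping.keys h1 \<subseteq> std_monoms V ord (vanishing_ideal V Q)"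
    "Poly_Mapping.keys h2 \<subseteq> std_monoms V ord (vanishing_ideal V Q)"
    "f - h1 \<in> vanishing_ideal V Q" "f - h2 \<in> vanishing_ideal V Q"
  shows "h1 = h2"
proof (rule ccontr)
  assume "h1 \<noteq> h2"
  let ?I = "vanishing_ideal V Q"
  have d: "h1 - h2 \<in> ?I" "h1 - h2 \<noteq> 0"
    using vanishing_ideal_diff[OF assms(4,3)] \<open>h1 \<noteq> h2\<close> by simp_all
  have keys_d: "Poly_Mapping.keys (h1 - h2) \<subseteq> std_monoms V ord ?I"
    using keys_diff[of h1 h2] assms(1,2) by blast
  then have "lm ord (h1 - h2) \<in> std_monoms V ord ?I"
    using lm_greatest(1)[OF d(2)] by (auto simp: std_monoms_def)
  moreover have "monom_poly (lm ord (h1 - h2)) \<in> initial_ideal V ord ?I"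
    unfolding initial_ideal_def by (rule ideal_gen_base) (use d in blast)
  ultimately show False
    by (simp add: std_monoms_def)
qed

lemma exists_normal_form:
  fixes Q :: "(nat \<Rightarrow> 'a::field) set"
  assumes V: "finite V" and Q: "finite Q" and f: "f \<in> polys V"
  obtains h where "Poly_Mapping.keys h \<subseteq> std_monoms V ord (vanishing_ideal V Q)"
    "f - h \<in> vanishing_ideal V Q" "\<forall>v\<in>Poly_Mapping.keys h. \<exists>u\<in>Poly_Mapping.keys f. v = u \<or> ord v u"
proof -
  let ?I = "vanishing_ideal V Q" and ?T = "std_monoms V ord (vanishing_ideal V Q)"
  define p where "p i = (\<Prod>b\<in>(\<lambda>q. q i) ` Q. [:- b, 1:])" for i
  have p: "poly_in_var i (p i) \<in> ?I" "lead_coeff (p i) = 1" if "i \<in> V" for i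
    using poly_in_var_in_vanishing_ideal[OF Q that] by (simp_all add: p_def lead_coeff_prod)
  define Box where "Box = {u \<in> monoms V. \<forall>i\<in>V. Poly_Mapping.lookup u i < degree (p i)}"
  define below where "below u = {b \<in> Box. b = u \<or> ord b u}" for u
  define tdeg where "tdeg u = (\<Sum>i\<in>V. Poly_Mapping.lookup u i)" for u :: monom
  define R where "R = inv_image (less_than <*lex*> less_than) (\<lambda>u. (card (below u), tdeg u))"
  txt \<open>Outside the finite box the univariate vanishing polynomials lower the total degree;
    inside it, reduction by a leading monomial shrinks the set of smaller box monomials.\<close>
  have fin_below: "finite (below u)" for u
    using finite_bounded_monoms[OF V, of "\<lambda>i. degree (p i)"] unfolding below_def Box_def
    by (rule finite_subset[rotated]) auto
  have Box: "Box \<subseteq> monoms V"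
    by (auto simp: Box_def)
  have below_mono: "card (below v) \<le> card (below u)" if "ord v u" "v \<in> monoms V" "u \<in> monoms V" for u v
    using that trans[of _ v u] fin_below Box by (intro card_mono) (auto simp: below_def)
  have below_less: "card (below v) < card (below u)" if "ord v u" "v \<in> monoms V" "u \<in> Box" for u v
  proof -
    have "below v \<subseteq> below u - {u}"
      using that trans[of _ v u] asym irrefl Box unfolding below_def by blast
    moreover have "u \<in> below u"
      using that by (simp add: below_def)
    ultimately show ?thesis
      using fin_below by (metis Diff_subset finite_Diff card_Diff1_less card_mono le_less_trans)
  qed
  have reducible: "reducible_below ?T R Q"
    unfolding reducible_below_def
  proof
    fix u assume u: "u \<in> monoms V - ?T"
    show "\<exists>r :: 'a mpoly. Poly_Mapping.keys r \<subseteq> monoms V \<and> monom_poly u - r \<in> ?I \<and>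
      (\<forall>v\<in>Poly_Mapping.keys r. ord v u \<and> (v, u) \<in> R)"
    proof (cases "u \<in> Box")
      case False
      then obtain i where i: "i \<in> V" "degree (p i) \<le> Poly_Mapping.lookup u i"
        using u by (auto simp: Box_def not_less)
      define w where "w = u - Poly_Mapping.single i (degree (p i))"
      have u_eq: "u = w + Poly_Mapping.single i (degree (p i))"
        unfolding w_def by (rule monom_split_single[OF i(2)])
      have w: "w \<in> monoms V"
        using u u_eq by (metis DiffD1 monoms_add_iff)
      obtain r :: "'a mpoly" where r: "Poly_Mapping.keys r \<subseteq> monoms V"
        "monom_poly (w + Poly_Mapping.single i (degree (p i))) - r \<in> ?I"
        "\<forall>v\<in>Poly_Mapping.keys r. \<exists>j<degree (p i). v = w + Poly_Mapping.single i j"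
        by (rule reduce_step_univariate[OF i(1) p[OF i(1)] w])
      have "ord v u \<and> (v, u) \<in> R" if v: "v \<in> Poly_Mapping.keys r" for v
      proof -
        obtain j where j: "j < degree (p i)" "v = w + Poly_Mapping.single i j"
          using r(3) v by blast
        have ord_vu: "ord v u"
          unfolding j(2) u_eq
          using add_left[OF single_in_monoms[OF i(1)] single_in_monoms[OF i(1)] w less_single[OF i(1) j(1)]] .
        have "card (below v) \<le> card (below u)"
          using below_mono[OF ord_vu] r(1) v u by blast
        moreover have "tdeg v < tdeg u"
          unfolding tdeg_def j(2) u_eq using i(1) V j(1)
          by (simp add: lookup_add sum.distrib lookup_single when_def)
        ultimately show ?thesis
          using ord_vu by (auto simp: R_def)
      qed
      then show ?thesis
        using r u_eq by auto
    next
      case True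
      have "monom_poly u \<in> ideal_gen V (monom_poly ` lm ord ` (?I - {0}) :: 'a mpoly set)"
        using u by (simp add: std_monoms_def initial_ideal_eq_monomial_ideal)
      then obtain f :: "'a mpoly" and w where f: "f \<in> ?I" "f \<noteq> 0" and w: "w \<in> monoms V"
        and u_eq: "u = w + lm ord f"
        using u by (auto simp: monom_poly_in_monomial_ideal_iff add.commute)
      obtain r :: "'a mpoly" where r: "Poly_Mapping.keys r \<subseteq> monoms V" "monom_poly u - r \<in> ?I"
        "\<forall>v\<in>Poly_Mapping.keys r. ord v u"
        using reduce_step_leading[OF f w] u_eq by metis
      then have "\<forall>v\<in>Poly_Mapping.keys r. (v, u) \<in> R"
        using below_less True unfolding R_def by auto
      then show ?thesis
        using r by blast
    qed
  qed
  have wf: "wf R" and T: "?T \<subseteq> monoms V" and keys_f: "Poly_Mapping.keys f \<subseteq> monoms V"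
    using f by (auto simp: R_def std_monoms_def polys_iff_keys)
  obtain h where h: "Poly_Mapping.keys h \<subseteq> ?T" "f - h \<in> ?I"
    "\<forall>v\<in>Poly_Mapping.keys h. \<exists>u\<in>Poly_Mapping.keys f. v = u \<or> ord v u"
    "f \<noteq> 0 \<Longrightarrow> lm ord f \<in> ?T \<Longrightarrow> Poly_Mapping.lookup h (lm ord f) = Poly_Mapping.lookup f (lm ord f)"
    by (rule reduce_poly[OF wf T reducible keys_f]) blast
  show ?thesis
    by (rule that[OF h(1-3)])
qed

lemma nf_props:
  fixes Q :: "(nat \<Rightarrow> 'a::field) set"
  assumes "finite V" "finite Q" "f \<in> polys V"
  shows "Poly_Mapping.keys (nf V ord (vanishing_ideal V Q) f) \<subseteq> std_monoms V ord (vanishing_ideal V Q)"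
    and "f - nf V ord (vanishing_ideal V Q) f \<in> vanishing_ideal V Q"
    and "\<forall>v\<in>Poly_Mapping.keys (nf V ord (vanishing_ideal V Q) f). \<exists>u\<in>Poly_Mapping.keys f. v = u \<or> ord v u"
proof -
  obtain h where h: "Poly_Mapping.keys h \<subseteq> std_monoms V ord (vanishing_ideal V Q)"
    "f - h \<in> vanishing_ideal V Q" "\<forall>v\<in>Poly_Mapping.keys h. \<exists>u\<in>Poly_Mapping.keys f. v = u \<or> ord v u"
    using exists_normal_form[OF assms] .
  have "nf V ord (vanishing_ideal V Q) f = h"
    unfolding nf_def using h nf_unique by (intro the_equality) blast+
  then show "Poly_Mapping.keys (nf V ord (vanishing_ideal V Q) f) \<subseteq> std_monoms V ord (vanishing_ideal V Q)"
    and "f - nf V ord (vanishing_ideal V Q) f \<in> vanishing_ideal V Q"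
    and "\<forall>v\<in>Poly_Mapping.keys (nf V ord (vanishing_ideal V Q) f). \<exists>u\<in>Poly_Mapping.keys f. v = u \<or> ord v u"
    using h by simp_all
qed

lemma lm_nonzero_in_vanishing_ideal:
  fixes f :: "'a::field mpoly"
  assumes Q: "Q \<noteq> {}" and f: "f \<in> vanishing_ideal V Q" "f \<noteq> 0"
  shows "lm ord f \<noteq> 0"
proof
  assume lm0: "lm ord f = 0"
  have keys_f: "Poly_Mapping.keys f \<subseteq> monoms V"
    using vanishing_ideal_polys[OF f(1)] by (simp add: polys_iff_keys)
  note lm = lm_greatest[OF f(2) keys_f]
  have "Poly_Mapping.keys f = {0}"
  proof (intro equalityI subsetI)
    fix v assume v: "v \<in> Poly_Mapping.keys f"
    show "v \<in> {0}"
    proof (rule ccontr)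
      assume "v \<notin> {0}"
      then have "ord v 0" "ord 0 v"
        using lm(2) v lm0 zero_less[of v] keys_f by auto
      then show False
        using asym[of v 0] v keys_f by auto
    qed
  qed (use lm(1) lm0 in simp)
  then have "f = Poly_Mapping.single 0 (Poly_Mapping.lookup f 0)"
    using sum_single_lookup[of f] by simp
  moreover obtain q where "q \<in> Q"
    using Q by blast
  then have "eval f q = 0"
    using f(1) by (simp add: vanishing_ideal_def)
  ultimately have "Poly_Mapping.lookup f 0 = 0"
    by (metis eval_single eval_monom_zero mult.right_neutral)
  then show False
    using lm(1) lm0 by (simp add: in_keys_iff)
qed

end

lemma keys_affine_combination:
  "Poly_Mapping.keys (Const a + (\<Sum>i\<in>E. Const (b i) * F i)) \<subseteq>
    insert 0 (\<Union>i\<in>{i\<in>E. b i \<noteq> 0}. Poly_Mapping.keys (F i :: 'a::comm_ring_1 mpoly))"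
proof
  fix v assume "v \<in> Poly_Mapping.keys (Const a + (\<Sum>i\<in>E. Const (b i) * F i))"
  then have "v \<in> Poly_Mapping.keys (Const a) \<or> v \<in> Poly_Mapping.keys (\<Sum>i\<in>E. Const (b i) * F i)"
    using keys_add[of "Const a" "\<Sum>i\<in>E. Const (b i) * F i"] by blast
  then show "v \<in> insert 0 (\<Union>i\<in>{i\<in>E. b i \<noteq> 0}. Poly_Mapping.keys (F i))"
  proof
    assume "v \<in> Poly_Mapping.keys (Const a)"
    then show ?thesis by (simp add: Const_def split: if_splits)
  next
    assume "v \<in> Poly_Mapping.keys (\<Sum>i\<in>E. Const (b i) * F i)"
    then obtain i where i: "i \<in> E" "v \<in> Poly_Mapping.keys (Const (b i) * F i)"
      using keys_sum[of "\<lambda>i. Const (b i) * F i" E] by blast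
    then have "b i \<noteq> 0"
      by (auto simp: in_keys_iff lookup_Const_mult)
    moreover have "v \<in> Poly_Mapping.keys (F i)"
      using i(2) keys_Const_mult[of "b i" "F i"] by blast
    ultimately show ?thesis
      using i(1) by blast
  qed
qed

lemma keys_Var_minus:
  "Poly_Mapping.keys (Var k - t) \<subseteq> insert (Poly_Mapping.single k 1) (Poly_Mapping.keys (t :: 'a::comm_ring_1 mpoly))"
  using keys_diff[of "Var k" t] by (simp add: Var_def)

lemma lookup_Var_minus:
  "Poly_Mapping.single k 1 \<notin> Poly_Mapping.keys t \<Longrightarrow>
    Poly_Mapping.lookup (Var k - t) (Poly_Mapping.single k 1) = (1 :: 'a::comm_ring_1)"
  by (simp add: lookup_minus Var_def in_keys_iff)

lemma (in mon_order) lm_Var_minus: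
  fixes t :: "'a::comm_ring_1 mpoly"
  assumes k: "k \<in> V" and t: "Poly_Mapping.keys t \<subseteq> monoms V"
    and less: "\<forall>v\<in>Poly_Mapping.keys t. ord v (Poly_Mapping.single k 1)"
  shows "lm ord (Var k - t) = Poly_Mapping.single k 1" and "lc ord (Var k - t) = 1"
proof -
  have notin: "Poly_Mapping.single k 1 \<notin> Poly_Mapping.keys t"
    using less irrefl[OF single_in_monoms[OF k]] by blast
  then have "Poly_Mapping.single k 1 \<in> Poly_Mapping.keys (Var k - t)"
    unfolding in_keys_iff lookup_Var_minus[OF notin] by simp
  moreover have "Poly_Mapping.keys (Var k - t) \<subseteq> monoms V"
    using keys_Var_minus[of k t] t single_in_monoms[OF k] by blast
  moreover have "\<forall>v\<in>Poly_Mapping.keys (Var k - t). v \<noteq> Poly_Mapping.single k 1 \<longrightarrow> ord v (Poly_Mapping.single k 1)"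
    using keys_Var_minus[of k t] less by blast
  ultimately show lm: "lm ord (Var k - t) = Poly_Mapping.single k 1"
    by (rule lm_eqI)
  show "lc ord (Var k - t) = 1"
    unfolding lc_def lm by (rule lookup_Var_minus[OF notin])
qed

section \<open>Eliminating the variables outside \<open>E\<close>\<close>

locale linear_elimination =
  fixes n :: nat and P :: "(nat \<Rightarrow> 'a::field) set" and ord :: "monom \<Rightarrow> monom \<Rightarrow> bool"
    and E :: "nat set" and c0 :: "nat \<Rightarrow> 'a" and c :: "nat \<Rightarrow> nat \<Rightarrow> 'a" and G' :: "'a mpoly set"
  assumes ord: "monomial_order {..<n} ord"
    and E_sub: "E \<subseteq> {..<n}"
    and finite_P: "finite P"
    and P_nonempty: "P \<noteq> {}"
    and lin: "\<forall>k\<in>{..<n} - E.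
          Var k - Const (c0 k) - (\<Sum>i\<in>E. Const (c k i) * Var i) \<in> vanishing_ideal {..<n} P
        \<and> (\<forall>i\<in>E. c k i \<noteq> 0 \<longrightarrow> ord (Poly_Mapping.single i 1) (Poly_Mapping.single k 1))"
    and G': "is_reduced_groebner_basis E (restrict_order E ord) (vanishing_ideal E (proj E ` P)) G'"
begin

text \<open>\<open>T\<close> is modelled as the polynomials in the variables \<open>E\<close>, so \<open>\<pi>\<^sup>*\<close> is the identity;
  \<open>IS\<close> and \<open>IT\<close> are \<open>I(P)\<close> and \<open>I(\<pi>(P))\<close>, and \<open>elim_poly k\<close> is the new basis element for \<open>x\<^sub>k\<close>.\<close>

abbreviation "ordT \<equiv> restrict_order E ord"
abbreviation "IS \<equiv> vanishing_ideal {..<n} P"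
abbreviation "IT \<equiv> vanishing_ideal E (proj E ` P)"
abbreviation "lin_tail k \<equiv> Const (c0 k) + (\<Sum>i\<in>E. Const (c k i) * Var i)"
abbreviation "elim_tail k \<equiv> Const (c0 k) + (\<Sum>i\<in>E. Const (c k i) * nf E ordT IT (Var i))"
abbreviation "elim_poly k \<equiv> Var k - Const (c0 k) - (\<Sum>i\<in>E. Const (c k i) * nf E ordT IT (Var i))"
abbreviation "G \<equiv> G' \<union> elim_poly ` ({..<n} - E)"

sublocale S: mon_order "{..<n}" ord
  by (rule mon_order.intro[OF ord])

sublocale T: mon_order E ordT
  by (rule mon_order.intro[OF monomial_order_restrict_order[OF ord E_sub]])

lemma finite_E: "finite E"
  using E_sub finite_subset by blast

lemma monoms_E: "monoms E \<subseteq> monoms {..<n}"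
  by (rule monoms_mono[OF E_sub])

lemma IT_iff_IS: "f \<in> polys E \<Longrightarrow> f \<in> IT \<longleftrightarrow> f \<in> IS"
  by (rule vanishing_ideal_proj_iff[OF E_sub])

lemma IT_subset_IS: "IT \<subseteq> IS"
  using IT_iff_IS vanishing_ideal_polys by blast

lemma nf_Var:
  assumes i: "i \<in> E"
  shows "Poly_Mapping.keys (nf E ordT IT (Var i)) \<subseteq> std_monoms E ordT IT"
    and "Var i - nf E ordT IT (Var i) \<in> IT"
    and "v \<in> Poly_Mapping.keys (nf E ordT IT (Var i)) \<Longrightarrow>
      v = Poly_Mapping.single i 1 \<or> ord v (Poly_Mapping.single i 1)"
proof -
  note nf = T.nf_props[OF finite_E finite_imageI[OF finite_P] polys_Var[OF i]]
  show "Poly_Mapping.keys (nf E ordT IT (Var i)) \<subseteq> std_monoms E ordT IT"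
    and "Var i - nf E ordT IT (Var i) \<in> IT"
    using nf(1,2) by blast+
  show "v \<in> Poly_Mapping.keys (nf E ordT IT (Var i)) \<Longrightarrow>
      v = Poly_Mapping.single i 1 \<or> ord v (Poly_Mapping.single i 1)"
    using nf(3) by (auto simp: Var_def restrict_order_def)
qed

lemma elim_poly_in_IS:
  assumes k: "k \<in> {..<n} - E"
  shows "elim_poly k \<in> IS"
proof -
  have "elim_poly k = (Var k - Const (c0 k) - (\<Sum>i\<in>E. Const (c k i) * Var i)) +
      (\<Sum>i\<in>E. Const (c k i) * (Var i - nf E ordT IT (Var i)))"
    by (simp add: right_diff_distrib sum_subtractf algebra_simps)
  also have "\<dots> \<in> IS"
    using lin k nf_Var(2) IT_subset_IS
    by (intro vanishing_ideal_add vanishing_ideal_sum vanishing_ideal_Const_mult) auto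
  finally show ?thesis .
qed

lemma affine_tail_below:
  assumes k: "k \<in> {..<n} - E"
    and F: "\<And>i v. i \<in> E \<Longrightarrow> v \<in> Poly_Mapping.keys (F i) \<Longrightarrow>
      v \<in> monoms E \<and> (v = Poly_Mapping.single i 1 \<or> ord v (Poly_Mapping.single i 1))"
  shows "\<forall>v\<in>Poly_Mapping.keys (Const (c0 k) + (\<Sum>i\<in>E. Const (c k i) * F i)).
    v \<in> monoms E \<and> ord v (Poly_Mapping.single k 1)"
proof
  fix v assume v: "v \<in> Poly_Mapping.keys (Const (c0 k) + (\<Sum>i\<in>E. Const (c k i) * F i))"
  have k1: "Poly_Mapping.single k 1 \<in> monoms {..<n}"
    using k by (simp add: single_in_monoms)
  consider "v = 0" | i where "i \<in> E" "c k i \<noteq> 0" "v \<in> Poly_Mapping.keys (F i)"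
    using keys_affine_combination[where a="c0 k" and b="c k" and F=F] v by blast
  then show "v \<in> monoms E \<and> ord v (Poly_Mapping.single k 1)"
  proof cases
    case 1
    then show ?thesis
      using S.zero_less[OF k1 single_one_nonzero] by simp
  next
    case (2 i)
    have i1: "ord (Poly_Mapping.single i 1) (Poly_Mapping.single k 1)"
      using lin k 2(1,2) by blast
    have vE: "v \<in> monoms E"
      using F[OF 2(1,3)] by blast
    have vS: "v \<in> monoms {..<n}" and iS: "Poly_Mapping.single i 1 \<in> monoms {..<n}"
      using vE monoms_E 2(1) E_sub by (auto intro: single_in_monoms)
    have "ord v (Poly_Mapping.single k 1)"
      using F[OF 2(1,3)]
    proof (elim conjE disjE)
      assume "ord v (Poly_Mapping.single i 1)"
      then show ?thesis
        using S.trans[OF vS iS k1 _ i1] by blast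
    qed (use i1 in simp)
    then show ?thesis
      using vE by blast
  qed
qed

lemma lin_tail_below:
  "k \<in> {..<n} - E \<Longrightarrow>
    \<forall>v\<in>Poly_Mapping.keys (lin_tail k). v \<in> monoms E \<and> ord v (Poly_Mapping.single k 1)"
  by (rule affine_tail_below) (auto simp: Var_def single_in_monoms)

lemma elim_tail_below:
  "k \<in> {..<n} - E \<Longrightarrow>
    \<forall>v\<in>Poly_Mapping.keys (elim_tail k). v \<in> monoms E \<and> ord v (Poly_Mapping.single k 1)"
proof (rule affine_tail_below)
  fix i v assume i: "i \<in> E" and v: "v \<in> Poly_Mapping.keys (nf E ordT IT (Var i))"
  show "v \<in> monoms E \<and> (v = Poly_Mapping.single i 1 \<or> ord v (Poly_Mapping.single i 1))"
    using nf_Var(1)[OF i] nf_Var(3)[OF i v] std_monoms_subset[of E ordT IT] v by blast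
qed

lemma keys_elim_tail: "Poly_Mapping.keys (elim_tail k) \<subseteq> insert 0 (std_monoms E ordT IT)"
  using keys_affine_combination[where a="c0 k" and b="c k" and F="\<lambda>i. nf E ordT IT (Var i)"]
    nf_Var(1) by blast

lemma lm_elim_poly:
  assumes k: "k \<in> {..<n} - E"
  shows "lm ord (elim_poly k) = Poly_Mapping.single k 1" and "lc ord (elim_poly k) = 1"
proof -
  have eq: "elim_poly k = Var k - elim_tail k"
    by (simp add: diff_diff_eq)
  have "k \<in> {..<n}" and tail: "Poly_Mapping.keys (elim_tail k) \<subseteq> monoms {..<n}"
    using k elim_tail_below[OF k] monoms_E by blast+
  from S.lm_Var_minus[OF this] elim_tail_below[OF k]
  show "lm ord (elim_poly k) = Poly_Mapping.single k 1" and "lc ord (elim_poly k) = 1"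
    unfolding eq by blast+
qed

lemma keys_elim_poly:
  assumes k: "k \<in> {..<n} - E" and t: "t \<in> Poly_Mapping.keys (elim_poly k)"
  shows "t = Poly_Mapping.single k 1 \<or> t \<in> monoms E"
    and "t \<noteq> Poly_Mapping.single k 1 \<Longrightarrow> t = 0 \<or> t \<in> std_monoms E ordT IT"
proof -
  have "t = Poly_Mapping.single k 1 \<or> t \<in> Poly_Mapping.keys (elim_tail k)"
    using keys_Var_minus[of k "elim_tail k"] t by (auto simp: diff_diff_eq)
  then show "t = Poly_Mapping.single k 1 \<or> t \<in> monoms E"
    and "t \<noteq> Poly_Mapping.single k 1 \<Longrightarrow> t = 0 \<or> t \<in> std_monoms E ordT IT"
    using keys_elim_tail[of k] elim_tail_below[OF k] by blast+
qed

lemma single_in_keys_elim_poly: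
  "k \<in> {..<n} - E \<Longrightarrow> Poly_Mapping.single k 1 \<in> Poly_Mapping.keys (elim_poly k)"
  using lm_elim_poly[of k] by (simp add: lc_def in_keys_iff)

lemma elim_poly_nonzero: "k \<in> {..<n} - E \<Longrightarrow> elim_poly k \<noteq> 0"
  using single_in_keys_elim_poly[of k] by auto

lemma elim_poly_not_in_polys_E: "k \<in> {..<n} - E \<Longrightarrow> elim_poly k \<notin> polys E"
  using single_in_keys_elim_poly[of k] by (auto simp: polys_iff_keys monoms_def)

lemma G'_groebner:
  shows "G' \<subseteq> IT" and "0 \<notin> G'" and "finite G'"
    and "ideal_gen E (monom_poly ` lm ordT ` G') = initial_ideal E ordT IT"
    and "g \<in> G' \<Longrightarrow> lc ordT g = 1"
    and "g \<in> G' \<Longrightarrow> t \<in> Poly_Mapping.keys g \<Longrightarrow>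
      (monom_poly t :: 'a mpoly) \<notin> ideal_gen E (monom_poly ` lm ordT ` (G' - {g}))"
  using G' unfolding is_reduced_groebner_basis_def is_groebner_basis_def lm_monomials_image
  by auto

lemma lm_G':
  assumes g: "g \<in> G'"
  shows "lm ord g = lm ordT g" and "lm ord g \<in> Poly_Mapping.keys g" and "lm ord g \<in> monoms E"
    and "lm ord g \<noteq> 0" and "lc ord g = 1" and "Poly_Mapping.keys g \<subseteq> monoms E"
proof -
  have gT: "g \<in> IT" and g0: "g \<noteq> 0"
    using G'_groebner(1,2) g by blast+
  show keys_g: "Poly_Mapping.keys g \<subseteq> monoms E"
    using vanishing_ideal_polys[OF gT] by (simp add: polys_iff_keys)
  show lm: "lm ord g = lm ordT g"
    using lm_restrict_order[OF keys_g] by simp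
  show "lm ord g \<in> Poly_Mapping.keys g"
    using T.lm_greatest(1)[OF g0 keys_g] lm by simp
  then show "lm ord g \<in> monoms E"
    using keys_g by blast
  show "lm ord g \<noteq> 0"
    using T.lm_nonzero_in_vanishing_ideal[OF _ gT g0] P_nonempty lm by simp
  show "lc ord g = 1"
    using G'_groebner(5)[OF g] lm by (simp add: lc_def)
qed

lemma G_in_IS: "g \<in> G \<Longrightarrow> g \<in> IS \<and> g \<noteq> 0"
  using G'_groebner(1,2) IT_subset_IS elim_poly_in_IS elim_poly_nonzero by auto

text \<open>Since the linear relations express every variable outside \<open>E\<close> through smaller variables in
  \<open>E\<close>, each monomial outside \<open>monoms E\<close> reduces to smaller ones with fewer such variables.\<close>

lemma reducible_below_monoms_E:
  "S.reducible_below (monoms E) (measure (\<lambda>u. \<Sum>l\<in>{..<n} - E. Poly_Mapping.lookup u l)) P"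
  unfolding S.reducible_below_def
proof
  define \<mu> where "\<mu> u = (\<Sum>l\<in>{..<n} - E. Poly_Mapping.lookup u l)" for u :: monom
  fix u assume u: "u \<in> monoms {..<n} - monoms E"
  then obtain k where k: "k \<in> {..<n} - E" "k \<in> Poly_Mapping.keys u"
    by (auto simp: monoms_def)
  define w where "w = u - Poly_Mapping.single k 1"
  have u_eq: "u = w + Poly_Mapping.single k 1"
    unfolding w_def by (rule monom_split_single) (use k(2) in \<open>simp add: in_keys_iff\<close>)
  have w: "w \<in> monoms {..<n}" and k1: "Poly_Mapping.single k 1 \<in> monoms {..<n}"
    using u u_eq by (metis DiffD1 monoms_add_iff)+
  have tail: "\<forall>v\<in>Poly_Mapping.keys (lin_tail k). v \<in> monoms E \<and> ord v (Poly_Mapping.single k 1)"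
    by (rule lin_tail_below[OF k(1)])
  have rel: "Var k - lin_tail k \<in> IS"
    using lin k(1) by (simp add: diff_diff_eq)
  have notin: "Poly_Mapping.single k 1 \<notin> Poly_Mapping.keys (lin_tail k)"
    using tail k(1) by (auto simp: monoms_def)
  have "Poly_Mapping.single k 1 \<in> Poly_Mapping.keys (Var k - lin_tail k)"
    unfolding in_keys_iff lookup_Var_minus[OF notin] by simp
  from monom_reduce[OF rel this w] obtain r :: "'a mpoly" where
    r: "Poly_Mapping.keys r \<subseteq> (\<lambda>v. w + v) ` (Poly_Mapping.keys (Var k - lin_tail k) - {Poly_Mapping.single k 1})"
       "monom_poly u - r \<in> IS"
    unfolding u_eq[symmetric] by blast
  have "v \<in> monoms {..<n} \<and> ord v u \<and> \<mu> v < \<mu> u" if v: "v \<in> Poly_Mapping.keys r" for v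
  proof -
    obtain v' where v': "v' \<in> Poly_Mapping.keys (lin_tail k)" "v = w + v'"
      using r(1) v keys_Var_minus[of k "lin_tail k"] by blast
    have v'E: "v' \<in> monoms E" and less: "ord v' (Poly_Mapping.single k 1)"
      using tail v'(1) by blast+
    have v'S: "v' \<in> monoms {..<n}"
      using v'E monoms_E by blast
    have "\<mu> v' = 0"
      using v'E unfolding \<mu>_def by (intro sum.neutral) (auto simp: monoms_def in_keys_iff)
    moreover have "\<mu> (Poly_Mapping.single k 1) = 1"
      unfolding \<mu>_def using k(1) by (simp add: lookup_single when_def)
    ultimately have "\<mu> v < \<mu> u"
      unfolding v'(2) u_eq \<mu>_def by (simp add: lookup_add sum.distrib)
    then show ?thesis
      unfolding v'(2) u_eq using S.add_left[OF v'S k1 w less] w v'S by (simp add: monoms_add_iff)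
  qed
  then show "\<exists>r :: 'a mpoly. Poly_Mapping.keys r \<subseteq> monoms {..<n} \<and> monom_poly u - r \<in> IS \<and>
      (\<forall>v\<in>Poly_Mapping.keys r. ord v u \<and> (v, u) \<in> measure \<mu>)"
    using r(2) by (intro exI[of _ r]) auto
qed

lemma lm_in_initial_ideal_IT:
  assumes f: "f \<in> IS" "f \<noteq> 0" and lmE: "lm ord f \<in> monoms E"
  shows "monom_poly (lm ord f) \<in> initial_ideal E ordT IT"
proof -
  have keys_f: "Poly_Mapping.keys f \<subseteq> monoms {..<n}"
    using vanishing_ideal_polys[OF f(1)] by (simp add: polys_iff_keys)
  note lm = S.lm_greatest[OF f(2) keys_f]
  obtain h where h: "Poly_Mapping.keys h \<subseteq> monoms E" "f - h \<in> IS"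
    "\<forall>v\<in>Poly_Mapping.keys h. \<exists>u\<in>Poly_Mapping.keys f. v = u \<or> ord v u"
    "Poly_Mapping.lookup h (lm ord f) = Poly_Mapping.lookup f (lm ord f)"
    by (rule S.reduce_poly[OF wf_measure monoms_E reducible_below_monoms_E keys_f]) (use f(2) lmE in blast)
  have "h \<in> IS"
    using vanishing_ideal_diff[OF f(1) h(2)] by simp
  then have hT: "h \<in> IT"
    using IT_iff_IS h(1) by (simp add: polys_iff_keys)
  have lm_h: "lm ord f \<in> Poly_Mapping.keys h"
    using h(4) lm(1) by (simp add: in_keys_iff)
  have "ordT v (lm ord f)" if v: "v \<in> Poly_Mapping.keys h" "v \<noteq> lm ord f" for v
  proof -
    obtain u where u: "u \<in> Poly_Mapping.keys f" "v = u \<or> ord v u"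
      using h(3) v(1) by blast
    have vS: "v \<in> monoms {..<n}" and uS: "u \<in> monoms {..<n}" and lmS: "lm ord f \<in> monoms {..<n}"
      using v(1) h(1) monoms_E u(1) keys_f lm(1) by blast+
    have "u = lm ord f \<or> ord u (lm ord f)"
      using lm(2) u(1) by blast
    then have "ord v (lm ord f)"
      using u(2) v(2) S.trans[OF vS uS lmS] by auto
    then show ?thesis
      using v(1) h(1) lmE by (auto simp: restrict_order_def)
  qed
  then have "lm ordT h = lm ord f"
    using T.lm_eqI[OF lm_h h(1)] by blast
  then show ?thesis
    unfolding initial_ideal_eq_monomial_ideal using hT lm_h
    by (intro ideal_gen_base) (auto intro!: image_eqI)
qed

lemma lm_divisible_by_G:
  assumes f: "f \<in> IS" "f \<noteq> 0"
  shows "\<exists>g\<in>G. \<exists>w\<in>monoms {..<n}. lm ord f = lm ord g + w"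
proof -
  have keys_f: "Poly_Mapping.keys f \<subseteq> monoms {..<n}"
    using vanishing_ideal_polys[OF f(1)] by (simp add: polys_iff_keys)
  have lmS: "lm ord f \<in> monoms {..<n}"
    using S.lm_greatest(1)[OF f(2) keys_f] keys_f by blast
  show ?thesis
  proof (cases "lm ord f \<in> monoms E")
    case True
    then have "monom_poly (lm ord f) \<in> ideal_gen E (monom_poly ` lm ordT ` G' :: 'a mpoly set)"
      using lm_in_initial_ideal_IT[OF f True] G'_groebner(4) by simp
    then obtain g w where g: "g \<in> G'" and w: "w \<in> monoms E" and eq: "lm ord f = lm ordT g + w"
      unfolding monom_poly_in_monomial_ideal_iff[OF True] by blast
    have "lm ord f = lm ord g + w"
      using eq lm_G'(1)[OF g] by simp
    moreover have "w \<in> monoms {..<n}"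
      using w monoms_E by blast
    ultimately show ?thesis
      using g by blast
  next
    case False
    then obtain k where k: "k \<in> {..<n} - E" "k \<in> Poly_Mapping.keys (lm ord f)"
      using lmS by (auto simp: monoms_def)
    define w where "w = lm ord f - Poly_Mapping.single k 1"
    have "lm ord f = w + Poly_Mapping.single k 1"
      unfolding w_def by (rule monom_split_single) (use k(2) in \<open>simp add: in_keys_iff\<close>)
    then have "lm ord f = lm ord (elim_poly k) + w" and "w \<in> monoms {..<n}"
      using lm_elim_poly(1)[OF k(1)] lmS by (simp_all add: add.commute monoms_add_iff)
    then show ?thesis
      using k(1) by blast
  qed
qed

lemma initial_ideal_IS: "ideal_gen {..<n} (monom_poly ` lm ord ` G) = initial_ideal {..<n} ord IS"
  unfolding initial_ideal_eq_monomial_ideal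
proof (rule antisym; rule ideal_gen_subset; rule subsetI)
  fix x :: "'a mpoly" assume "x \<in> monom_poly ` lm ord ` G"
  then have "x \<in> monom_poly ` lm ord ` (IS - {0})"
    using G_in_IS by blast
  then show "x \<in> ideal_gen {..<n} (monom_poly ` lm ord ` (IS - {0}))"
    by (rule ideal_gen_base)
next
  fix x :: "'a mpoly" assume "x \<in> monom_poly ` lm ord ` (IS - {0})"
  then obtain f where f: "f \<in> IS" "f \<noteq> 0" "x = monom_poly (lm ord f)"
    by blast
  have keys_f: "Poly_Mapping.keys f \<subseteq> monoms {..<n}"
    using vanishing_ideal_polys[OF f(1)] by (simp add: polys_iff_keys)
  then have lmS: "lm ord f \<in> monoms {..<n}"
    using S.lm_greatest(1)[OF f(2) keys_f] by blast
  obtain g w where "g \<in> G" "w \<in> monoms {..<n}" "lm ord f = lm ord g + w"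
    using lm_divisible_by_G[OF f(1,2)] by blast
  then show "x \<in> ideal_gen {..<n} (monom_poly ` lm ord ` G)"
    unfolding f(3) monom_poly_in_monomial_ideal_iff[OF lmS] by blast
qed

lemma keys_G'_not_divisible:
  assumes g: "g \<in> G'" and t: "t \<in> Poly_Mapping.keys g" and h: "h \<in> G" "h \<noteq> g"
  shows "t \<noteq> lm ord h + w"
proof
  assume t_eq: "t = lm ord h + w"
  have tE: "t \<in> monoms E"
    using lm_G'(6)[OF g] t by blast
  show False
  proof (cases "h \<in> G'")
    case True
    have "w \<in> monoms E"
      using tE t_eq by (simp add: monoms_add_iff)
    then have "(monom_poly t :: 'a mpoly) \<in> ideal_gen E (monom_poly ` lm ordT ` (G' - {g}))"
      unfolding monom_poly_in_monomial_ideal_iff[OF tE] using True h(2) t_eq lm_G'(1)[OF True] by blast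
    then show False
      using G'_groebner(6)[OF g t] by blast
  next
    case False
    then obtain k where k: "k \<in> {..<n} - E" "h = elim_poly k"
      using h(1) by blast
    have "k \<in> Poly_Mapping.keys t"
      using t_eq lm_elim_poly(1)[OF k(1)] k(2) by (simp add: keys_add_monom)
    then show False
      using tE k(1) by (auto simp: monoms_def)
  qed
qed

lemma keys_elim_poly_not_divisible:
  assumes k: "k \<in> {..<n} - E" and t: "t \<in> Poly_Mapping.keys (elim_poly k)"
    and h: "h \<in> G" "h \<noteq> elim_poly k"
  shows "t \<noteq> lm ord h + w"
proof
  assume t_eq: "t = lm ord h + w"
  then have keys_lm: "Poly_Mapping.keys (lm ord h) \<subseteq> Poly_Mapping.keys t"
    by (simp add: keys_add_monom)
  show False
  proof (cases "h \<in> G'")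
    case True
    obtain j where j: "j \<in> Poly_Mapping.keys (lm ord h)"
      using lm_G'(4)[OF True] by (metis all_not_in_conv keys_eq_empty)
    then have jE: "j \<in> E"
      using lm_G'(3)[OF True] by (auto simp: monoms_def)
    consider "t = Poly_Mapping.single k 1" | "t = 0" | "t \<in> std_monoms E ordT IT"
      using keys_elim_poly[OF k t] by blast
    then show False
    proof cases
      case 1
      then show False
        using j keys_lm jE k by auto
    next
      case 2
      then show False
        using j keys_lm by simp
    next
      case 3
      then have tE: "t \<in> monoms E"
        using std_monoms_subset by blast
      then have "w \<in> monoms E"
        using t_eq by (simp add: monoms_add_iff)
      then have "(monom_poly t :: 'a mpoly) \<in> ideal_gen E (monom_poly ` lm ordT ` G')"
        unfolding monom_poly_in_monomial_ideal_iff[OF tE] using True t_eq lm_G'(1)[OF True] by blast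
      then show False
        using 3 G'_groebner(4) by (simp add: std_monoms_def)
    qed
  next
    case False
    then obtain k' where k': "k' \<in> {..<n} - E" "h = elim_poly k'"
      using h(1) by blast
    have "k' \<in> Poly_Mapping.keys t"
      using keys_lm lm_elim_poly(1)[OF k'(1)] k'(2) by auto
    moreover have "k' \<noteq> k"
      using h(2) k' by blast
    ultimately show False
      using keys_elim_poly(1)[OF k t] k'(1) by (auto simp: monoms_def)
  qed
qed

lemma G_reduced:
  assumes g: "g \<in> G" and t: "t \<in> Poly_Mapping.keys g"
  shows "(monom_poly t :: 'a mpoly) \<notin> ideal_gen {..<n} (monom_poly ` lm ord ` (G - {g}))"
proof
  have "g \<in> polys {..<n}"
    using vanishing_ideal_polys[of g "{..<n}" P] G_in_IS[OF g] by blast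
  then have tS: "t \<in> monoms {..<n}"
    using t by (auto simp: polys_iff_keys)
  assume "(monom_poly t :: 'a mpoly) \<in> ideal_gen {..<n} (monom_poly ` lm ord ` (G - {g}))"
  then obtain h w where h: "h \<in> G" "h \<noteq> g" and t_eq: "t = lm ord h + w"
    unfolding monom_poly_in_monomial_ideal_iff[OF tS] by blast
  show False
  proof (cases "g \<in> G'")
    case True
    then show False
      using keys_G'_not_divisible[OF True t h] t_eq by blast
  next
    case False
    then obtain k where k: "k \<in> {..<n} - E" "g = elim_poly k"
      using g by blast
    have "t \<in> Poly_Mapping.keys (elim_poly k)"
      using t k(2) by simp
    then show False
      using keys_elim_poly_not_divisible[OF k(1) _ h(1)] h(2) k(2) t_eq by blast
  qed
qed

theorem reduced_groebner_basis_G: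
  "G' \<inter> elim_poly ` ({..<n} - E) = {} \<and> is_reduced_groebner_basis {..<n} ord IS G"
proof -
  have "elim_poly k \<notin> G'" if k: "k \<in> {..<n} - E" for k
    using lm_G'(6)[of "elim_poly k"] elim_poly_not_in_polys_E[OF k] by (auto simp: polys_iff_keys)
  then have "G' \<inter> elim_poly ` ({..<n} - E) = {}"
    by blast
  moreover have "finite G"
    using G'_groebner(3) by simp
  moreover have "G \<subseteq> IS" "0 \<notin> G"
    using G_in_IS by blast+
  moreover have "\<forall>g\<in>G. lc ord g = 1"
    using lm_G'(5) lm_elim_poly(2) by auto
  ultimately show ?thesis
    unfolding is_reduced_groebner_basis_def is_groebner_basis_def lm_monomials_image
    using initial_ideal_IS G_reduced by blast
qed

end

text \<open>Of the hypotheses below, only \<open>card_E\<close> (through \<open>m \<ge> 1\<close>) enters the proof beyond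
  \<open>ord\<close>, \<open>E_sub\<close>, \<open>lin\<close> and \<open>G'\<close>: the conditions on the points, on \<open>supp B\<close> and on the rank
  of \<open>E(P)\<close> are what guarantees, in the paper, that the linear relations \<open>lin\<close> exist.\<close>

theorem mainTheorem15:
  fixes n m :: nat
    and ps :: "nat \<Rightarrow> nat \<Rightarrow> 'a::field"
    and ord :: "monom \<Rightarrow> monom \<Rightarrow> bool"
    and E :: "nat set"
    and c0 :: "nat \<Rightarrow> 'a" and c :: "nat \<Rightarrow> nat \<Rightarrow> 'a"
    and G' :: "'a mpoly set"
  defines "P \<equiv> ps ` {..<m}"
  assumes ord: "monomial_order {..<n} ord"
    and pts_in: "\<forall>l<m. \<forall>i\<ge>n. ps l i = 0"
    and distinct: "inj_on ps {..<m}"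
    and E_sub: "E \<subseteq> {..<n}"
    and supp_B: "supp (std_monoms {..<n} ord (vanishing_ideal {..<n} P :: 'a mpoly set)) \<subseteq> E"
    and card_E: "int (card E) \<le> min (int m - 1) (int n)"
    and rank_E: "vec_space.rank (card E) (eval_matrix E m ps) = card E"
    and lin: "\<forall>k\<in>{..<n} - E.
          Var k - Const (c0 k) - (\<Sum>i\<in>E. Const (c k i) * Var i) \<in> vanishing_ideal {..<n} P
        \<and> (\<forall>i\<in>E. c k i \<noteq> 0 \<longrightarrow> ord (Poly_Mapping.single i 1) (Poly_Mapping.single k 1))"
    and G': "is_reduced_groebner_basis E (restrict_order E ord)
               (vanishing_ideal E (proj E ` P)) G'"
  shows "G' \<inter> (\<lambda>k. Var k - Const (c0 k) - (\<Sum>i\<in>E. Const (c k i) *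
                   nf E (restrict_order E ord) (vanishing_ideal E (proj E ` P)) (Var i)))
              ` ({..<n} - E) = {}
    \<and> is_reduced_groebner_basis {..<n} ord (vanishing_ideal {..<n} P)
       (G' \<union> (\<lambda>k. Var k - Const (c0 k) - (\<Sum>i\<in>E. Const (c k i) *
                   nf E (restrict_order E ord) (vanishing_ideal E (proj E ` P)) (Var i)))
              ` ({..<n} - E))"
proof -
  have "finite P" "P \<noteq> {}"
    using card_E unfolding P_def by auto
  then interpret linear_elimination n P ord E c0 c G'
    using ord E_sub lin G' by unfold_locales
  show ?thesis
    by (rule reduced_groebner_basis_G)
qed

end
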